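(* Let $C\subseteq\Lambda$ be any region. Let $W$ be any Hamiltonian that is relatively bounded by $H_0(C)$ with a constant $0\le b<1$, i.e. $\|W\psi\|\le b\|H_0(C)\psi\|$ for all $\psi\in\mathcal{H}$. Then for any operator $S$ on $\mathcal{H}$, \[ \|Q_C[S,W]P_C\|\le b\,\|Q_C[S,H_0(C)]P_C\|. \]
   Context: Let $\Lambda=\mathbb{Z}_L\times\mathbb{Z}_L$, each site carrying a finite-dimensional Hilbert space, $\mathcal{H}$ their tensor product, and $\mathcal{S}(2)$ the set of $2\times2$ squares of sites. $H_0=\sum_{A\in\mathcal{S}(2)}G_A$ with each $G_A$ acting on $A$, the $G_A$ pairwise commuting, $G_A\ge0$ and $G_A^2\ge G_A$. $P_A$ is the projector onto $\ker G_A$; for a region $C$, $P_C=\prod_{A\in\mathcal{S}(2),A\subseteq C}P_A$, $Q_C=I-P_C$, and $H_0(C)=\sum_{A\in\mathcal{S}(2),A\subseteq C}G_A$. *)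

theory Defs
  imports Complex_Main "HOL-Library.Product_Lexorder" "HOL-Library.Function_Algebras"
begin

text \<open>Lattice Lambda = Z_L x Z_L, sites represented as pairs (i,j) with i,j < L.
  Site x carries the Hilbert space C^(d x). The tensor product Hilbert space is
  represented by functions on configurations (basis labels); vectors and operators
  are complex functions on configurations, resp. pairs of configurations,
  vanishing outside the set of valid configurations.\<close>

type_synonym site = "nat \<times> nat"
type_synonym config = "site \<Rightarrow> nat"
type_synonym vect = "config \<Rightarrow> complex"
type_synonym oper = "config \<Rightarrow> config \<Rightarrow> complex"

definition sites :: "nat \<Rightarrow> site set" where
  "sites L = {0..<L} \<times> {0..<L}"

definition sq :: "nat \<Rightarrow> site \<Rightarrow> site set" where
  "sq L c = {((fst c + a) mod L, (snd c + b) mod L) | a b. a \<in> {0,1::nat} \<and> b \<in> {0,1::nat}}"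

definition squares :: "nat \<Rightarrow> site set set" where
  "squares L = sq L ` sites L"

definition configs :: "nat \<Rightarrow> (site \<Rightarrow> nat) \<Rightarrow> config set" where
  "configs L d = {\<sigma>. (\<forall>x\<in>sites L. \<sigma> x < d x) \<and> (\<forall>x. x \<notin> sites L \<longrightarrow> \<sigma> x = 0)}"

definition is_vec :: "nat \<Rightarrow> (site \<Rightarrow> nat) \<Rightarrow> vect \<Rightarrow> bool" where
  "is_vec L d \<psi> \<longleftrightarrow> (\<forall>\<sigma>. \<sigma> \<notin> configs L d \<longrightarrow> \<psi> \<sigma> = 0)"

definition is_op :: "nat \<Rightarrow> (site \<Rightarrow> nat) \<Rightarrow> oper \<Rightarrow> bool" where
  "is_op L d M \<longleftrightarrow> (\<forall>\<sigma> \<tau>. \<sigma> \<notin> configs L d \<or> \<tau> \<notin> configs L d \<longrightarrow> M \<sigma> \<tau> = 0)"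

definition app :: "nat \<Rightarrow> (site \<Rightarrow> nat) \<Rightarrow> oper \<Rightarrow> vect \<Rightarrow> vect" where
  "app L d M \<psi> = (\<lambda>\<sigma>. if \<sigma> \<in> configs L d then (\<Sum>\<tau>\<in>configs L d. M \<sigma> \<tau> * \<psi> \<tau>) else 0)"

definition opmult :: "nat \<Rightarrow> (site \<Rightarrow> nat) \<Rightarrow> oper \<Rightarrow> oper \<Rightarrow> oper" where
  "opmult L d M N = (\<lambda>\<sigma> \<tau>. if \<sigma> \<in> configs L d \<and> \<tau> \<in> configs L d
      then (\<Sum>\<rho>\<in>configs L d. M \<sigma> \<rho> * N \<rho> \<tau>) else 0)"

definition opid :: "nat \<Rightarrow> (site \<Rightarrow> nat) \<Rightarrow> oper" where
  "opid L d = (\<lambda>\<sigma> \<tau>. if \<sigma> \<in> configs L d \<and> \<sigma> = \<tau> then 1 else 0)"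

definition commutator :: "nat \<Rightarrow> (site \<Rightarrow> nat) \<Rightarrow> oper \<Rightarrow> oper \<Rightarrow> oper" where
  "commutator L d S W = opmult L d S W - opmult L d W S"

definition inner :: "nat \<Rightarrow> (site \<Rightarrow> nat) \<Rightarrow> vect \<Rightarrow> vect \<Rightarrow> complex" where
  "inner L d \<phi> \<psi> = (\<Sum>\<sigma>\<in>configs L d. cnj (\<phi> \<sigma>) * \<psi> \<sigma>)"

definition vnorm :: "nat \<Rightarrow> (site \<Rightarrow> nat) \<Rightarrow> vect \<Rightarrow> real" where
  "vnorm L d \<psi> = sqrt (\<Sum>\<sigma>\<in>configs L d. (cmod (\<psi> \<sigma>))\<^sup>2)"

definition opnorm :: "nat \<Rightarrow> (site \<Rightarrow> nat) \<Rightarrow> oper \<Rightarrow> real" where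
  "opnorm L d M = Sup {vnorm L d (app L d M \<psi>) | \<psi>. is_vec L d \<psi> \<and> vnorm L d \<psi> \<le> 1}"

definition hermitian :: "nat \<Rightarrow> (site \<Rightarrow> nat) \<Rightarrow> oper \<Rightarrow> bool" where
  "hermitian L d M \<longleftrightarrow> (\<forall>\<sigma> \<tau>. M \<sigma> \<tau> = cnj (M \<tau> \<sigma>))"

definition psd :: "nat \<Rightarrow> (site \<Rightarrow> nat) \<Rightarrow> oper \<Rightarrow> bool" where
  "psd L d M \<longleftrightarrow> hermitian L d M \<and>
     (\<forall>\<psi>. is_vec L d \<psi> \<longrightarrow> 0 \<le> Re (inner L d \<psi> (app L d M \<psi>)))"

definition restr :: "config \<Rightarrow> site set \<Rightarrow> config" where
  "restr \<sigma> A = (\<lambda>x. if x \<in> A then \<sigma> x else 0)"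

text \<open>M acts on region A: M = g \<otimes> identity on the complement of A.\<close>
definition acts_on :: "nat \<Rightarrow> (site \<Rightarrow> nat) \<Rightarrow> site set \<Rightarrow> oper \<Rightarrow> bool" where
  "acts_on L d A M \<longleftrightarrow> (\<exists>g. \<forall>\<sigma>\<in>configs L d. \<forall>\<tau>\<in>configs L d.
      M \<sigma> \<tau> = (if (\<forall>x\<in>sites L - A. \<sigma> x = \<tau> x) then g (restr \<sigma> A) (restr \<tau> A) else 0))"

definition kernel_projector :: "nat \<Rightarrow> (site \<Rightarrow> nat) \<Rightarrow> oper \<Rightarrow> oper \<Rightarrow> bool" where
  "kernel_projector L d G P \<longleftrightarrow> is_op L d P \<and> hermitian L d P \<and> opmult L d P P = P \<and>
     (\<forall>\<psi>. is_vec L d \<psi> \<longrightarrow> (app L d P \<psi> = \<psi> \<longleftrightarrow> app L d G \<psi> = (\<lambda>_. 0)))"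

text \<open>P_C = product of P_A over squares A contained in C (the P_A commute, so the
  order, here fixed via the sorted list of corners, is irrelevant).\<close>
definition region_proj :: "nat \<Rightarrow> (site \<Rightarrow> nat) \<Rightarrow> (site set \<Rightarrow> oper) \<Rightarrow> site set \<Rightarrow> oper" where
  "region_proj L d P C = foldr (opmult L d)
     (map P (remdups (map (sq L) (sorted_list_of_set {c \<in> sites L. sq L c \<subseteq> C})))) (opid L d)"

definition H0_region :: "nat \<Rightarrow> (site set \<Rightarrow> oper) \<Rightarrow> site set \<Rightarrow> oper" where
  "H0_region L G C = (\<Sum>A\<in>{A \<in> squares L. A \<subseteq> C}. G A)"

end

theory Submission
  imports Defs "HOL-Library.FuncSet"
begin

text \<open>Every square inside \<open>C\<close> contributes its kernel projector as a factor of \<open>P\<^sub>C\<close>; since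
  the \<open>P\<^sub>A\<close> commute, this factor can be moved next to \<open>G\<^sub>A\<close>, so \<open>H\<^sub>0(C) P\<^sub>C = 0\<close>.
  Relative boundedness then gives \<open>W P\<^sub>C = 0\<close>, and by hermiticity \<open>P\<^sub>C W = 0\<close>.
  For such \<open>V \<in> {W, H\<^sub>0(C)}\<close> the compressed commutator collapses to
  \<open>Q\<^sub>C [S,V] P\<^sub>C = -V S P\<^sub>C\<close>, and \<open>\<parallel>W S P\<^sub>C \<psi>\<parallel> \<le> b \<parallel>H\<^sub>0(C) S P\<^sub>C \<psi>\<parallel>\<close> is the
  relative bound applied to \<open>S P\<^sub>C \<psi>\<close>.\<close>

lemma finite_configs: "finite (configs L d)"
proof -
  let ?f = "\<lambda>\<sigma>::config. restrict \<sigma> (sites L)"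
  have "?f ` configs L d \<subseteq> PiE (sites L) (\<lambda>x. {..<d x})"
    by (auto simp: configs_def PiE_iff)
  moreover have "finite (sites L)" by (simp add: sites_def)
  ultimately have "finite (?f ` configs L d)"
    by (meson finite_PiE finite_lessThan finite_subset)
  moreover have "inj_on ?f (configs L d)"
    unfolding inj_on_def configs_def by (auto simp: fun_eq_iff restrict_def) metis
  ultimately show ?thesis using finite_imageD by blast
qed

lemma opmult_assoc: "opmult L d (opmult L d M N) R = opmult L d M (opmult L d N R)"
  unfolding opmult_def
  by (auto simp: fun_eq_iff sum_distrib_left sum_distrib_right mult.assoc intro: sum.swap)

lemma app_opmult: "app L d (opmult L d M N) \<psi> = app L d M (app L d N \<psi>)"
  unfolding opmult_def app_def
  by (auto simp: fun_eq_iff sum_distrib_left sum_distrib_right mult.assoc intro: sum.swap)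

lemma opmult_diff_left: "opmult L d (M - N) R = opmult L d M R - opmult L d N R"
  unfolding opmult_def by (auto simp: fun_eq_iff algebra_simps sum_subtractf)

lemma opmult_add_left: "opmult L d (M + N) R = opmult L d M R + opmult L d N R"
  unfolding opmult_def by (auto simp: fun_eq_iff algebra_simps sum.distrib)

lemma opmult_uminus_right: "opmult L d R (- M) = - opmult L d R M"
  unfolding opmult_def by (auto simp: fun_eq_iff sum_negf)

lemma opmult_zero_left [simp]: "opmult L d 0 R = 0"
  unfolding opmult_def by (auto simp: fun_eq_iff)

lemma opmult_zero_right [simp]: "opmult L d R 0 = 0"
  unfolding opmult_def by (auto simp: fun_eq_iff)

lemma opmult_sum_left:
  "finite F \<Longrightarrow> opmult L d (\<Sum>A\<in>F. M A) N = (\<Sum>A\<in>F. opmult L d (M A) N)"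
proof (induction F rule: finite_induct)
  case (insert A F)
  then show ?case by (simp only: sum.insert[OF insert.hyps] opmult_add_left)
qed (simp only: sum.empty opmult_zero_left)

lemma is_op_opmult: "is_op L d (opmult L d M N)"
  unfolding is_op_def opmult_def by auto

lemma is_op_sum: "(\<And>A. A \<in> F \<Longrightarrow> is_op L d (M A)) \<Longrightarrow> is_op L d (\<Sum>A\<in>F. M A)"
  by (induction F rule: infinite_finite_induct) (auto simp: is_op_def)

lemma opid_opmult:
  assumes "is_op L d M"
  shows "opmult L d (opid L d) M = M"
proof (intro ext)
  fix \<sigma> \<tau>
  show "opmult L d (opid L d) M \<sigma> \<tau> = M \<sigma> \<tau>"
  proof (cases "\<sigma> \<in> configs L d \<and> \<tau> \<in> configs L d")
    case True
    then have "(\<Sum>\<rho>\<in>configs L d. opid L d \<sigma> \<rho> * M \<rho> \<tau>)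
             = (\<Sum>\<rho>\<in>configs L d. if \<sigma> = \<rho> then M \<rho> \<tau> else 0)"
      by (intro sum.cong) (auto simp: opid_def)
    with True show ?thesis by (simp add: opmult_def finite_configs)
  qed (use assms in \<open>auto simp: is_op_def opmult_def\<close>)
qed

lemma opmult_opid:
  assumes "is_op L d M"
  shows "opmult L d M (opid L d) = M"
proof (intro ext)
  fix \<sigma> \<tau>
  show "opmult L d M (opid L d) \<sigma> \<tau> = M \<sigma> \<tau>"
  proof (cases "\<sigma> \<in> configs L d \<and> \<tau> \<in> configs L d")
    case True
    then have "(\<Sum>\<rho>\<in>configs L d. M \<sigma> \<rho> * opid L d \<rho> \<tau>)
             = (\<Sum>\<rho>\<in>configs L d. if \<rho> = \<tau> then M \<sigma> \<rho> else 0)"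
      by (intro sum.cong) (auto simp: opid_def)
    with True show ?thesis by (simp add: opmult_def finite_configs)
  qed (use assms in \<open>auto simp: is_op_def opmult_def\<close>)
qed

lemma app_diff: "app L d (M - N) \<psi> = (\<lambda>\<sigma>. app L d M \<psi> \<sigma> - app L d N \<psi> \<sigma>)"
  by (simp add: app_def fun_eq_iff sum_subtractf algebra_simps)

lemma app_uminus: "app L d (- M) \<psi> = (\<lambda>\<sigma>. - app L d M \<psi> \<sigma>)"
  by (simp add: app_def fun_eq_iff sum_negf)

lemma app_zero: "app L d 0 \<psi> = (\<lambda>_. 0)"
  by (simp add: app_def fun_eq_iff)

lemma is_vec_app: "is_vec L d (app L d M \<psi>)"
  by (simp add: is_vec_def app_def)

lemma op_eq_0I:
  assumes "is_op L d M" and "\<And>\<psi>. is_vec L d \<psi> \<Longrightarrow> app L d M \<psi> = (\<lambda>_. 0)"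
  shows "M = 0"
proof (intro ext)
  fix \<sigma> \<tau>
  show "M \<sigma> \<tau> = 0 \<sigma> \<tau>"
  proof (cases "\<sigma> \<in> configs L d \<and> \<tau> \<in> configs L d")
    case True
    let ?e = "\<lambda>\<rho>. if \<rho> = \<tau> then 1 else (0::complex)"
    have "is_vec L d ?e" using True by (auto simp: is_vec_def)
    then have "app L d M ?e \<sigma> = 0" using assms(2) by simp
    moreover have "app L d M ?e \<sigma> = M \<sigma> \<tau>" using True
      by (simp add: app_def if_distrib sum.delta[OF finite_configs] cong: if_cong)
    ultimately show ?thesis by simp
  qed (use assms(1) in \<open>auto simp: is_op_def\<close>)
qed

definition adjoint :: "oper \<Rightarrow> oper" where
  "adjoint M = (\<lambda>\<sigma> \<tau>. cnj (M \<tau> \<sigma>))"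

lemma adjoint_opmult: "adjoint (opmult L d M N) = opmult L d (adjoint N) (adjoint M)"
  unfolding adjoint_def opmult_def by (auto simp: fun_eq_iff mult.commute)

lemma adjoint_zero [simp]: "adjoint 0 = 0"
  unfolding adjoint_def by (auto simp: fun_eq_iff)

lemma hermitian_iff_adjoint: "hermitian L d M \<longleftrightarrow> adjoint M = M"
  unfolding hermitian_def adjoint_def fun_eq_iff by (metis complex_cnj_cnj)

lemma hermitian_add:
  assumes "hermitian L d M" "hermitian L d N"
  shows "hermitian L d (M + N)"
  unfolding hermitian_def
proof (intro allI)
  fix \<sigma> \<tau>
  show "(M + N) \<sigma> \<tau> = cnj ((M + N) \<tau> \<sigma>)"
    using assms[unfolded hermitian_def, rule_format, of \<sigma> \<tau>] by simp
qed

lemma hermitian_sum: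
  "(\<And>A. A \<in> F \<Longrightarrow> hermitian L d (M A)) \<Longrightarrow> hermitian L d (\<Sum>A\<in>F. M A)"
proof (induction F rule: infinite_finite_induct)
  case (insert A F)
  then show ?case unfolding sum.insert[OF insert.hyps] by (intro hermitian_add) simp_all
qed (simp_all add: hermitian_iff_adjoint)

lemma opmult_zero_swap:
  assumes "hermitian L d M" "hermitian L d N" "opmult L d M N = 0"
  shows "opmult L d N M = 0"
  using arg_cong[OF assms(3), of adjoint] assms(1,2)
  by (simp add: adjoint_opmult hermitian_iff_adjoint)

lemma kernel_projector_opmult_zero:
  assumes "kernel_projector L d G P"
  shows "opmult L d G P = 0"
proof (rule op_eq_0I[OF is_op_opmult])
  fix \<psi> assume "is_vec L d \<psi>"
  have "app L d P (app L d P \<psi>) = app L d P \<psi>"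
    using assms unfolding kernel_projector_def by (simp add: app_opmult[symmetric])
  then have "app L d G (app L d P \<psi>) = (\<lambda>_. 0)"
    using assms is_vec_app unfolding kernel_projector_def by blast
  then show "app L d (opmult L d G P) \<psi> = (\<lambda>_. 0)" by (simp add: app_opmult)
qed

text \<open>\<open>M P\<close> maps into \<open>ker G = ran P\<close>, so \<open>P M P = M P\<close>; taking adjoints gives \<open>P M P = P M\<close>.\<close>

lemma kernel_projector_commute:
  assumes P: "kernel_projector L d G P" and M: "hermitian L d M"
    and GM: "opmult L d G M = opmult L d M G"
  shows "opmult L d P M = opmult L d M P"
proof -
  have "opmult L d P (opmult L d M P) - opmult L d M P = 0"
  proof (rule op_eq_0I)
    show "is_op L d (opmult L d P (opmult L d M P) - opmult L d M P)"
      using is_op_opmult unfolding is_op_def by simp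
  next
    fix \<psi> assume "is_vec L d \<psi>"
    let ?\<phi> = "app L d (opmult L d M P) \<psi>"
    have "opmult L d G (opmult L d M P) = opmult L d M (opmult L d G P)"
      by (simp add: GM opmult_assoc[symmetric])
    then have "app L d G ?\<phi> = app L d 0 \<psi>"
      using kernel_projector_opmult_zero[OF P] by (simp add: app_opmult[symmetric])
    then have "app L d G ?\<phi> = (\<lambda>_. 0)" by (simp add: app_zero)
    then have "app L d P ?\<phi> = ?\<phi>" using P is_vec_app unfolding kernel_projector_def by blast
    then show "app L d (opmult L d P (opmult L d M P) - opmult L d M P) \<psi> = (\<lambda>_. 0)"
      by (simp add: app_diff app_opmult)
  qed
  then have PMP: "opmult L d P (opmult L d M P) = opmult L d M P"
    by (simp only: right_minus_eq)
  have "hermitian L d P" using P by (simp add: kernel_projector_def)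
  then have "opmult L d (opmult L d P M) P = opmult L d P M"
    using arg_cong[OF PMP, of adjoint] M
    by (simp add: adjoint_opmult hermitian_iff_adjoint)
  with PMP show ?thesis by (simp add: opmult_assoc)
qed

locale commuting_hermitian_family =
  fixes L :: nat and d :: "site \<Rightarrow> nat" and F :: "oper set"
  assumes commute: "\<And>M N. M \<in> F \<Longrightarrow> N \<in> F \<Longrightarrow> opmult L d M N = opmult L d N M"
    and is_op: "\<And>M. M \<in> F \<Longrightarrow> is_op L d M"
    and hermitian: "\<And>M. M \<in> F \<Longrightarrow> hermitian L d M"
begin

abbreviation opprod :: "oper list \<Rightarrow> oper" where
  "opprod Ms \<equiv> foldr (opmult L d) Ms (opid L d)"

lemma opmult_opprod_commute:
  assumes "M \<in> F" "set Ns \<subseteq> F"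
  shows "opmult L d M (opprod Ns) = opmult L d (opprod Ns) M"
  using assms(2)
proof (induction Ns)
  case Nil
  show ?case using is_op[OF assms(1)] by (simp add: opid_opmult opmult_opid)
next
  case (Cons N Ns)
  then have MN: "opmult L d M N = opmult L d N M" using assms(1) commute[of M N] by simp
  have IH: "opmult L d M (opprod Ns) = opmult L d (opprod Ns) M" using Cons by simp
  have "opmult L d M (opprod (N # Ns)) = opmult L d (opmult L d N M) (opprod Ns)"
    by (simp add: MN opmult_assoc[symmetric])
  also have "\<dots> = opmult L d (opprod (N # Ns)) M"
    by (simp add: IH opmult_assoc)
  finally show ?case .
qed

lemma hermitian_opprod: "set Ms \<subseteq> F \<Longrightarrow> hermitian L d (opprod Ms)"
proof (induction Ms)
  case Nil
  show ?case by (auto simp: hermitian_def opid_def)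
next
  case (Cons M Ms)
  then have "adjoint (opmult L d M (opprod Ms)) = opmult L d (opprod Ms) M"
    using hermitian by (simp add: adjoint_opmult hermitian_iff_adjoint)
  also have "\<dots> = opmult L d M (opprod Ms)"
    using opmult_opprod_commute[of M Ms] Cons.prems by simp
  finally show ?case by (simp add: hermitian_iff_adjoint)
qed

lemma opprod_remove1:
  "set Ms \<subseteq> F \<Longrightarrow> M \<in> set Ms \<Longrightarrow> opprod Ms = opmult L d M (opprod (remove1 M Ms))"
proof (induction Ms)
  case (Cons N Ms)
  show ?case
  proof (cases "N = M")
    case False
    then have "opprod (N # Ms) = opmult L d (opmult L d N M) (opprod (remove1 M Ms))"
      using Cons by (simp add: opmult_assoc)
    also have "\<dots> = opmult L d (opmult L d M N) (opprod (remove1 M Ms))"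
      using commute[of N M] Cons.prems by auto
    finally show ?thesis using False by (simp add: opmult_assoc)
  qed simp
qed simp

end

lemma commuting_hermitian_family_kernel_projectors:
  assumes P: "\<And>A. A \<in> I \<Longrightarrow> kernel_projector L d (G A) (P A)"
    and G_herm: "\<And>A. A \<in> I \<Longrightarrow> hermitian L d (G A)"
    and G_comm: "\<And>A B. A \<in> I \<Longrightarrow> B \<in> I \<Longrightarrow>
                   opmult L d (G A) (G B) = opmult L d (G B) (G A)"
  shows "commuting_hermitian_family L d (P ` I)"
proof
  fix M N assume "M \<in> P ` I" "N \<in> P ` I"
  then obtain A B where A: "A \<in> I" "M = P A" and B: "B \<in> I" "N = P B"
    by blast
  have "opmult L d (P B) (G A) = opmult L d (G A) (P B)"
    by (rule kernel_projector_commute[OF P[OF B(1)] G_herm[OF A(1)] G_comm[OF B(1) A(1)]])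
  moreover have "hermitian L d (P B)" using P[OF B(1)] by (simp add: kernel_projector_def)
  ultimately have "opmult L d (P A) (P B) = opmult L d (P B) (P A)"
    using kernel_projector_commute[OF P[OF A(1)]] by simp
  with A B show "opmult L d M N = opmult L d N M" by simp
qed (use P in \<open>auto simp: kernel_projector_def\<close>)

lemma set_region_proj_factors:
  "set (map P (remdups (map (sq L) (sorted_list_of_set {c \<in> sites L. sq L c \<subseteq> C}))))
     = P ` {A \<in> squares L. A \<subseteq> C}"
proof -
  have "finite (sites L)" by (simp add: sites_def)
  then show ?thesis unfolding squares_def by auto
qed

context commuting_hermitian_family
begin

lemma hermitian_region_proj:
  assumes "P ` squares L \<subseteq> F"
  shows "hermitian L d (region_proj L d P C)"
  unfolding region_proj_def
  by (rule hermitian_opprod) (use assms in \<open>unfold set_region_proj_factors, auto\<close>)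

lemma region_proj_factor:
  assumes "P ` squares L \<subseteq> F" "A \<in> squares L" "A \<subseteq> C"
  obtains R where "region_proj L d P C = opmult L d (P A) R"
proof -
  let ?Ps = "map P (remdups (map (sq L) (sorted_list_of_set {c \<in> sites L. sq L c \<subseteq> C})))"
  have "set ?Ps \<subseteq> F" "P A \<in> set ?Ps"
    using assms unfolding set_region_proj_factors by auto
  then have "region_proj L d P C = opmult L d (P A) (opprod (remove1 (P A) ?Ps))"
    unfolding region_proj_def by (rule opprod_remove1)
  then show ?thesis by (rule that)
qed

lemma H0_region_opmult_region_proj:
  assumes "P ` squares L \<subseteq> F" and P: "\<And>A. A \<in> squares L \<Longrightarrow> kernel_projector L d (G A) (P A)"
  shows "opmult L d (H0_region L G C) (region_proj L d P C) = 0"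
proof -
  have "finite {A \<in> squares L. A \<subseteq> C}" by (simp add: squares_def sites_def)
  then have "opmult L d (H0_region L G C) (region_proj L d P C)
           = (\<Sum>A\<in>{A \<in> squares L. A \<subseteq> C}. opmult L d (G A) (region_proj L d P C))"
    unfolding H0_region_def by (rule opmult_sum_left)
  also have "\<dots> = (\<Sum>A\<in>{A \<in> squares L. A \<subseteq> C}. 0)"
  proof (rule sum.cong[OF refl])
    fix A assume "A \<in> {A \<in> squares L. A \<subseteq> C}"
    then obtain R where A: "A \<in> squares L" and "region_proj L d P C = opmult L d (P A) R"
      using region_proj_factor assms(1) by blast
    then show "opmult L d (G A) (region_proj L d P C) = 0"
      using kernel_projector_opmult_zero[OF P[OF A]] by (simp add: opmult_assoc[symmetric])
  qed
  finally show ?thesis by simp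
qed

end

lemma vnorm_uminus: "vnorm L d (\<lambda>\<sigma>. - v \<sigma>) = vnorm L d v"
  by (simp add: vnorm_def)

lemma cmod_le_vnorm:
  assumes "\<sigma> \<in> configs L d"
  shows "cmod (v \<sigma>) \<le> vnorm L d v"
proof -
  have "(cmod (v \<sigma>))\<^sup>2 \<le> (\<Sum>\<sigma>\<in>configs L d. (cmod (v \<sigma>))\<^sup>2)"
    using assms by (intro member_le_sum) (auto simp: finite_configs)
  then show ?thesis unfolding vnorm_def by (metis norm_ge_zero real_le_rsqrt)
qed

lemma vnorm_le_0_imp_zero:
  assumes "vnorm L d v \<le> 0" "\<sigma> \<in> configs L d"
  shows "v \<sigma> = 0"
  using cmod_le_vnorm[OF assms(2), of v] assms(1) by (metis norm_le_zero_iff order_trans)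

lemma bounded_app_unit_ball:
  "bdd_above {vnorm L d (app L d M \<psi>) | \<psi>. is_vec L d \<psi> \<and> vnorm L d \<psi> \<le> 1}"
proof (rule bdd_aboveI, safe)
  fix \<psi> assume \<psi>: "vnorm L d \<psi> \<le> 1"
  have "cmod (app L d M \<psi> \<sigma>) \<le> (\<Sum>\<tau>\<in>configs L d. cmod (M \<sigma> \<tau>))" if "\<sigma> \<in> configs L d" for \<sigma>
  proof -
    have "cmod (app L d M \<psi> \<sigma>) \<le> (\<Sum>\<tau>\<in>configs L d. cmod (M \<sigma> \<tau> * \<psi> \<tau>))"
      using that by (simp add: app_def norm_sum)
    also have "\<dots> \<le> (\<Sum>\<tau>\<in>configs L d. cmod (M \<sigma> \<tau>))"
    proof (rule sum_mono)
      fix \<tau> assume "\<tau> \<in> configs L d"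
      then have "cmod (\<psi> \<tau>) \<le> 1" using cmod_le_vnorm \<psi> order_trans by blast
      then show "cmod (M \<sigma> \<tau> * \<psi> \<tau>) \<le> cmod (M \<sigma> \<tau>)"
        by (simp add: norm_mult mult_left_le)
    qed
    finally show ?thesis .
  qed
  then have "(\<Sum>\<sigma>\<in>configs L d. (cmod (app L d M \<psi> \<sigma>))\<^sup>2)
           \<le> (\<Sum>\<sigma>\<in>configs L d. (\<Sum>\<tau>\<in>configs L d. cmod (M \<sigma> \<tau>))\<^sup>2)"
    by (intro sum_mono power_mono) auto
  then show "vnorm L d (app L d M \<psi>) \<le> sqrt (\<Sum>\<sigma>\<in>configs L d. (\<Sum>\<tau>\<in>configs L d. cmod (M \<sigma> \<tau>))\<^sup>2)"
    unfolding vnorm_def by simp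
qed

lemma opnorm_le_scaled:
  assumes "0 \<le> b"
    and "\<And>\<psi>. is_vec L d \<psi> \<Longrightarrow> vnorm L d (app L d X \<psi>) \<le> b * vnorm L d (app L d Y \<psi>)"
  shows "opnorm L d X \<le> b * opnorm L d Y"
  unfolding opnorm_def
proof (rule cSup_least)
  have "is_vec L d (\<lambda>_. 0)" "vnorm L d (\<lambda>_. 0) \<le> 1" by (simp_all add: is_vec_def vnorm_def)
  then show "{vnorm L d (app L d X \<psi>) | \<psi>. is_vec L d \<psi> \<and> vnorm L d \<psi> \<le> 1} \<noteq> {}" by blast
next
  fix x assume "x \<in> {vnorm L d (app L d X \<psi>) | \<psi>. is_vec L d \<psi> \<and> vnorm L d \<psi> \<le> 1}"
  then obtain \<psi> where x: "x = vnorm L d (app L d X \<psi>)" and \<psi>: "is_vec L d \<psi>" "vnorm L d \<psi> \<le> 1"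
    by blast
  have "vnorm L d (app L d Y \<psi>) \<le> Sup {vnorm L d (app L d Y \<psi>) | \<psi>. is_vec L d \<psi> \<and> vnorm L d \<psi> \<le> 1}"
    using \<psi> by (intro cSup_upper[OF _ bounded_app_unit_ball]) blast
  with assms \<psi> show "x \<le> b * Sup {vnorm L d (app L d Y \<psi>) | \<psi>. is_vec L d \<psi> \<and> vnorm L d \<psi> \<le> 1}"
    unfolding x by (meson mult_left_mono order_trans)
qed

lemma relatively_bounded_opmult_zero:
  assumes bound: "\<And>\<psi>. is_vec L d \<psi> \<Longrightarrow> vnorm L d (app L d W \<psi>) \<le> b * vnorm L d (app L d H \<psi>)"
    and HP: "opmult L d H P = 0"
  shows "opmult L d W P = 0"
proof (rule op_eq_0I[OF is_op_opmult])
  fix \<psi> assume "is_vec L d \<psi>"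
  have "app L d H (app L d P \<psi>) = (\<lambda>_. 0)" using HP by (metis app_opmult app_zero)
  then have "vnorm L d (app L d W (app L d P \<psi>)) \<le> b * vnorm L d (\<lambda>_. 0)"
    using bound[OF is_vec_app] by metis
  then have "vnorm L d (app L d W (app L d P \<psi>)) \<le> 0"
    by (simp add: vnorm_def)
  then have "app L d W (app L d P \<psi>) \<sigma> = 0" for \<sigma>
  proof (cases "\<sigma> \<in> configs L d")
    case True
    with \<open>vnorm L d (app L d W (app L d P \<psi>)) \<le> 0\<close> show ?thesis by (rule vnorm_le_0_imp_zero)
  qed (simp add: app_def)
  then show "app L d (opmult L d W P) \<psi> = (\<lambda>_. 0)"
    by (simp add: app_opmult fun_eq_iff)
qed

text \<open>If \<open>V\<close> annihilates \<open>P\<close> from both sides, only the term \<open>-V S\<close> of \<open>[S,V]\<close> survives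
  the compression, and \<open>I - P\<close> acts on it as the identity.\<close>

lemma compressed_commutator_eq:
  assumes V: "is_op L d V" and VP: "opmult L d V P = 0" and PV: "opmult L d P V = 0"
  shows "opmult L d (opmult L d (opid L d - P) (commutator L d S V)) P
       = - opmult L d V (opmult L d S P)"
proof -
  have "opmult L d (commutator L d S V) P = - opmult L d V (opmult L d S P)"
    unfolding commutator_def by (simp add: opmult_diff_left opmult_assoc VP)
  then have "opmult L d (opmult L d (opid L d - P) (commutator L d S V)) P
           = - (opmult L d V (opmult L d S P) - opmult L d (opmult L d P V) (opmult L d S P))"
    by (simp add: opmult_assoc opmult_uminus_right opmult_diff_left opid_opmult is_op_opmult)
  then show ?thesis by (simp add: PV)
qed

lemma opnorm_compressed_commutator_le:
  assumes "0 \<le> b"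
    and bound: "\<And>\<psi>. is_vec L d \<psi> \<Longrightarrow> vnorm L d (app L d W \<psi>) \<le> b * vnorm L d (app L d H \<psi>)"
    and W: "is_op L d W" "hermitian L d W" and H: "is_op L d H" "hermitian L d H"
    and P: "hermitian L d P" and HP: "opmult L d H P = 0"
  shows "opnorm L d (opmult L d (opmult L d (opid L d - P) (commutator L d S W)) P)
       \<le> b * opnorm L d (opmult L d (opmult L d (opid L d - P) (commutator L d S H)) P)"
proof -
  have WP: "opmult L d W P = 0"
    using bound HP by (rule relatively_bounded_opmult_zero)
  have "opnorm L d (- opmult L d W (opmult L d S P)) \<le> b * opnorm L d (- opmult L d H (opmult L d S P))"
  proof (rule opnorm_le_scaled[OF \<open>0 \<le> b\<close>])
    fix \<psi> :: vect
    show "vnorm L d (app L d (- opmult L d W (opmult L d S P)) \<psi>)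
        \<le> b * vnorm L d (app L d (- opmult L d H (opmult L d S P)) \<psi>)"
      using bound[OF is_vec_app] by (simp only: app_uminus vnorm_uminus app_opmult)
  qed
  moreover have "opmult L d (opmult L d (opid L d - P) (commutator L d S W)) P
      = - opmult L d W (opmult L d S P)"
    using W(1) WP opmult_zero_swap[OF W(2) P WP] by (rule compressed_commutator_eq)
  moreover have "opmult L d (opmult L d (opid L d - P) (commutator L d S H)) P
      = - opmult L d H (opmult L d S P)"
    using H(1) HP opmult_zero_swap[OF H(2) P HP] by (rule compressed_commutator_eq)
  ultimately show ?thesis by simp
qed

theorem lemma4:
  fixes L :: nat and d :: "site \<Rightarrow> nat"
    and G P :: "site set \<Rightarrow> oper"
    and C :: "site set" and W S :: oper and b :: real
  assumes L_pos: "0 < L"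
    and d_pos: "\<forall>x\<in>sites L. 0 < d x"
    and G_op: "\<forall>A\<in>squares L. is_op L d (G A) \<and> acts_on L d A (G A)"
    and G_comm: "\<forall>A\<in>squares L. \<forall>B\<in>squares L. opmult L d (G A) (G B) = opmult L d (G B) (G A)"
    and G_pos: "\<forall>A\<in>squares L. psd L d (G A)"
    and G_sq: "\<forall>A\<in>squares L. psd L d (opmult L d (G A) (G A) - G A)"
    and P_def: "\<forall>A\<in>squares L. kernel_projector L d (G A) (P A)"
    and C_sub: "C \<subseteq> sites L"
    and W_op: "is_op L d W" and W_herm: "hermitian L d W"
    and b_ge: "0 \<le> b" and b_lt: "b < 1"
    and W_bound: "\<forall>\<psi>. is_vec L d \<psi> \<longrightarrow>
        vnorm L d (app L d W \<psi>) \<le> b * vnorm L d (app L d (H0_region L G C) \<psi>)"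
    and S_op: "is_op L d S"
  shows "opnorm L d (opmult L d (opmult L d (opid L d - region_proj L d P C) (commutator L d S W))
                       (region_proj L d P C))
         \<le> b * opnorm L d (opmult L d (opmult L d (opid L d - region_proj L d P C)
                       (commutator L d S (H0_region L G C))) (region_proj L d P C))"
proof (rule opnorm_compressed_commutator_le[OF b_ge _ W_op W_herm])
  have G_herm: "\<And>A. A \<in> squares L \<Longrightarrow> hermitian L d (G A)"
    using G_pos by (simp add: psd_def)
  interpret commuting_hermitian_family L d "P ` squares L"
    using P_def G_herm G_comm by (intro commuting_hermitian_family_kernel_projectors[where G = G]) auto
  show "hermitian L d (region_proj L d P C)"
    by (rule hermitian_region_proj) (rule order_refl)
  show "is_op L d (H0_region L G C)"
    unfolding H0_region_def by (rule is_op_sum) (use G_op in blast)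
  show "hermitian L d (H0_region L G C)"
    unfolding H0_region_def by (rule hermitian_sum) (use G_herm in blast)
  show "opmult L d (H0_region L G C) (region_proj L d P C) = 0"
    by (rule H0_region_opmult_region_proj) (use P_def in auto)
qed (use W_bound in blast)

end
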